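(* Let $F$, $H$, $X$, $\Omega$, $Q$ and the sequences generated by the IneIREG method be as described in the context, and suppose $H$ is $\mu$-strongly monotone for some $\mu>0$. Suppose $(\eta_k)$ is nonincreasing; $0<\lambda_k<1/L_k$ for all $k\ge0$, where $L_k:=L_F+\eta_kL_H$; and $\alpha_0\in[0,1]$ and $\alpha_{k+1}\le(1-\beta_k)\alpha_k$ for all $k\ge0$, where $\beta_k:=\big(\frac{1}{1-\lambda_k^2L_k^2}+\frac{1}{2\lambda_k\eta_k\mu}\big)^{-1}$. Define $p_{-1}:=1$, $p_k:=\big(\prod_{i=0}^k(1-\beta_i)\big)^{-1}$ for $k\ge0$, and for $k\ge1$, $\Lambda_k:=\sum_{j=0}^{k-1}\lambda_j\eta_jp_j$, $\overline y_k:=\Lambda_k^{-1}\sum_{j=0}^{k-1}\lambda_j\eta_jp_jy_j$. Then for all $k\ge1$, $$0\le\mathrm{Gap}(\overline y_k,F,X)\le\frac{1}{2\Lambda_k}\Big(\eta_0D_X^2+\sum_{j=0}^{k-1}\eta_jp_{j-1}\delta_j+2\Big(\sum_{j=0}^{k-1}\lambda_j\eta_j^2p_j\Big)C_HD_X\Big).$$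
   Context: Work in $\mathbb{R}^n$ with Euclidean inner product $\langle\cdot,\cdot\rangle$ and norm $\|\cdot\|$. The maps $F\colon \mathrm{Dom}\,F\to\mathbb{R}^n$ and $H\colon\mathrm{Dom}\,H\to\mathbb{R}^n$ are monotone and Lipschitz continuous with constants $L_F>0$ and $L_H>0$; $H$ is $\mu$-strongly monotone means $\langle H(x)-H(y),x-y\rangle\ge\mu\|x-y\|^2$ for all $x,y\in\mathrm{Dom}\,H$. $X$ is a nonempty compact convex set and $\Omega$ a nonempty closed convex set with $X\subset\Omega\subset\mathrm{Dom}\,F\cap\mathrm{Dom}\,H$; $P_X,P_\Omega$ denote orthogonal projections. $Q:=\{x\in X:\langle F(x),y-x\rangle\ge0\ \forall y\in X\}$ is assumed nonempty. $D_X:=\sup_{x,y\in X}\|x-y\|$, $C_H:=\sup_{x\in X}\|H(x)\|$. $\mathrm{Gap}(z,F,X):=\sup_{x\in X}\langle F(x),z-x\rangle$. IneIREG method: start with $x_0=x_{-1}\in X$; for $k=0,1,\dots$, with parameters $\alpha_k\ge0$, $\lambda_k>0$, $\eta_k>0$, set $w_k=x_k+\alpha_k(x_k-x_{k-1})$, $w'_k=P_\Omega(w_k)$, $y_k=P_X\big(w_k-\lambda_k(F(w'_k)+\eta_kH(w'_k))\big)$, $x_{k+1}=P_X\big(w_k-\lambda_k(F(y_k)+\eta_kH(y_k))\big)$. Also $\delta_k:=\alpha_k(1+\alpha_k)\|x_k-x_{k-1}\|^2$ for $k\ge0$. *)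

theory Defs
  imports "HOL-Analysis.Analysis"
begin

definition monotone_op :: "('a::real_inner \<Rightarrow> 'a) \<Rightarrow> 'a set \<Rightarrow> bool" where
  "monotone_op F D \<longleftrightarrow> (\<forall>x\<in>D. \<forall>y\<in>D. inner (F x - F y) (x - y) \<ge> 0)"

definition strongly_monotone_op :: "real \<Rightarrow> ('a::real_inner \<Rightarrow> 'a) \<Rightarrow> 'a set \<Rightarrow> bool" where
  "strongly_monotone_op \<mu> F D \<longleftrightarrow>
     (\<forall>x\<in>D. \<forall>y\<in>D. inner (F x - F y) (x - y) \<ge> \<mu> * (norm (x - y))\<^sup>2)"

definition Gap :: "'a::real_inner \<Rightarrow> ('a \<Rightarrow> 'a) \<Rightarrow> 'a set \<Rightarrow> real" where
  "Gap z F X = (SUP x\<in>X. inner (F x) (z - x))"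

end

(* For every u in X one step of the method satisfies
     ||x_{k+1} - u||^2 <= (1 - beta_k) ||w_k - u||^2 - 2 lam_k <F u, y_k - u> + 2 lam_k eta_k <H u, u - y_k>:
   the extragradient estimate leaves a negative term (1 - lam_k^2 L_k^2) ||w_k - y_k||^2, strong
   monotonicity of F + eta_k H a negative term 2 lam_k eta_k mu ||y_k - u||^2, and together they
   dominate beta_k ||w_k - u||^2, since beta_k is half the harmonic mean of the two coefficients.
   Multiplying by eta_k p_k turns 1 - beta_k into p_{k-1}. After expanding the extrapolation w_k the
   terms eta_k p_{k-1} ||x_k - u||^2 telescope, and the inertial terms are controlled because
   eta_k p_{k-1} alpha_k is nonincreasing. This bounds sum_j lam_j eta_j p_j <F u, y_j - u>, that is
   Lambda_k <F u, ybar_k - u>, uniformly in u. The gap is nonnegative because ybar_k lies in X and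
   the variational inequality has a solution. *)

theory Submission
  imports Defs
begin

lemma extragradient_projection_estimate:
  fixes G :: "'a::{real_inner,heine_borel} \<Rightarrow> 'a"
  assumes X: "convex X" "closed X" "X \<noteq> {}" and \<Omega>: "convex \<Omega>" "closed \<Omega>" and "X \<subseteq> \<Omega>"
    and G_lip: "L-lipschitz_on \<Omega> G" and lam: "0 \<le> lam" and u: "u \<in> X"
    and w'_def: "w' = closest_point \<Omega> w"
    and y_def: "y = closest_point X (w - lam *\<^sub>R G w')"
    and x'_def: "x' = closest_point X (w - lam *\<^sub>R G y)"
  shows "(norm (x' - u))\<^sup>2 \<le> (norm (w - u))\<^sup>2 - (1 - lam\<^sup>2 * L\<^sup>2) * (norm (w - y))\<^sup>2
           + 2 * lam * inner (G y) (u - y)"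
proof -
  have "\<Omega> \<noteq> {}" using X(3) \<open>X \<subseteq> \<Omega>\<close> by blast
  have "y \<in> X" "x' \<in> X" unfolding y_def x'_def using X closest_point_in_set by blast+
  have "w' \<in> \<Omega>" unfolding w'_def using \<Omega> \<open>\<Omega> \<noteq> {}\<close> closest_point_in_set by blast
  have x'_var_ineq: "inner ((w - lam *\<^sub>R G y) - x') (u - x') \<le> 0"
    unfolding x'_def using closest_point_dot[OF X(1,2) u] .
  have y_var_ineq: "inner ((w - lam *\<^sub>R G w') - y) (x' - y) \<le> 0"
    unfolding y_def using closest_point_dot[OF X(1,2) \<open>x' \<in> X\<close>] y_def by simp
  have expand: "(norm (x' - u))\<^sup>2 = (norm (w - u))\<^sup>2 - (norm (w - y))\<^sup>2 - (norm (y - x'))\<^sup>2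
     + 2 * lam * inner (G y) (u - y) + 2 * lam * inner (G y - G w') (y - x')
     + 2 * inner ((w - lam *\<^sub>R G y) - x') (u - x') + 2 * inner ((w - lam *\<^sub>R G w') - y) (x' - y)"
    by (simp add: power2_norm_eq_inner inner_simps inner_commute algebra_simps)
  have "norm (y - w') = dist (closest_point \<Omega> y) (closest_point \<Omega> w)"
    using closest_point_self[of y \<Omega>] \<open>y \<in> X\<close> \<open>X \<subseteq> \<Omega>\<close> w'_def by (auto simp: dist_norm)
  also have "\<dots> \<le> norm (w - y)"
    using closest_point_lipschitz[OF \<Omega> \<open>\<Omega> \<noteq> {}\<close>] by (simp add: dist_norm norm_minus_commute)
  finally have "norm (y - w') \<le> norm (w - y)" .
  then have "norm (G y - G w') \<le> L * norm (w - y)"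
    using lipschitz_on_normD[OF G_lip] lipschitz_on_nonneg[OF G_lip] \<open>y \<in> X\<close> \<open>X \<subseteq> \<Omega>\<close> \<open>w' \<in> \<Omega>\<close>
    by (meson mult_left_mono order_trans subsetD)
  then have "inner (G y - G w') (y - x') \<le> L * norm (w - y) * norm (y - x')"
    by (meson mult_right_mono norm_cauchy_schwarz norm_ge_zero order_trans)
  moreover have "2 * lam * (L * norm (w - y) * norm (y - x'))
      \<le> lam\<^sup>2 * L\<^sup>2 * (norm (w - y))\<^sup>2 + (norm (y - x'))\<^sup>2"
    using sum_squares_bound[of "lam * L * norm (w - y)" "norm (y - x')"]
    by (simp add: power2_eq_square algebra_simps)
  ultimately have "2 * lam * inner (G y - G w') (y - x')
      \<le> lam\<^sup>2 * L\<^sup>2 * (norm (w - y))\<^sup>2 + (norm (y - x'))\<^sup>2"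
    using lam by (smt (verit) mult_left_mono)
  then show ?thesis
    using expand x'_var_ineq y_var_ineq by (simp add: algebra_simps)
qed

lemma harmonic_mean_mult_sq_le:
  fixes a b s t d :: real
  assumes "0 < a" "0 < b" "0 \<le> d" "d \<le> s + t"
  shows "1 / (1 / a + 1 / b) * d\<^sup>2 \<le> a * s\<^sup>2 + b * t\<^sup>2"
proof -
  have "d\<^sup>2 \<le> (s + t)\<^sup>2"
    using assms(3,4) by (simp add: power_mono)
  moreover have "1 / (1 / a + 1 / b) = a * b / (a + b)"
    using assms(1,2) by (simp add: field_simps)
  ultimately have "1 / (1 / a + 1 / b) * d\<^sup>2 \<le> a * b / (a + b) * (s + t)\<^sup>2"
    using assms(1,2) by (metis add_pos_pos divide_nonneg_pos less_eq_real_def mult_left_mono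
        mult_pos_pos)
  also have "\<dots> \<le> a * s\<^sup>2 + b * t\<^sup>2"
  proof -
    have "a * b * (s + t)\<^sup>2 \<le> (a * s\<^sup>2 + b * t\<^sup>2) * (a + b)"
      using sum_squares_bound[of "a * s" "b * t"] by (simp add: power2_eq_square algebra_simps)
    then show ?thesis using assms(1,2) by (simp add: pos_divide_le_eq)
  qed
  finally show ?thesis .
qed

lemma norm_extrapolation_sq:
  fixes U V :: "'a::real_inner"
  shows "(norm ((1 + a) *\<^sub>R U - a *\<^sub>R V))\<^sup>2
    = (1 + a) * (norm U)\<^sup>2 - a * (norm V)\<^sup>2 + a * (1 + a) * (norm (U - V))\<^sup>2"
  by (simp add: power2_norm_eq_inner inner_simps inner_commute algebra_simps)

lemma strongly_monotone_op_add:
  assumes "monotone_op F D" "strongly_monotone_op \<mu> H E" "0 \<le> \<eta>"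
  shows "strongly_monotone_op (\<eta> * \<mu>) (\<lambda>z. F z + \<eta> *\<^sub>R H z) (D \<inter> E)"
  unfolding strongly_monotone_op_def
proof (intro ballI)
  fix u v assume "u \<in> D \<inter> E" "v \<in> D \<inter> E"
  then have "0 \<le> inner (F u - F v) (u - v)" "\<mu> * (norm (u - v))\<^sup>2 \<le> inner (H u - H v) (u - v)"
    using assms(1,2) unfolding monotone_op_def strongly_monotone_op_def by auto
  then have "\<eta> * \<mu> * (norm (u - v))\<^sup>2 \<le> inner (F u - F v) (u - v) + \<eta> * inner (H u - H v) (u - v)"
    using assms(3) by (smt (verit) mult.assoc mult_left_mono)
  then show "\<eta> * \<mu> * (norm (u - v))\<^sup>2 \<le> inner (F u + \<eta> *\<^sub>R H u - (F v + \<eta> *\<^sub>R H v)) (u - v)"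
    by (simp add: inner_simps algebra_simps)
qed

(* At j = 0 the term phi (j - 1) is phi 0, since 0 - 1 = 0 on nat. *)
lemma inertial_lyapunov_bound:
  fixes a \<alpha> \<phi> r :: "nat \<Rightarrow> real"
  assumes a_nonneg: "\<And>j. 0 \<le> a j" and \<alpha>_nonneg: "\<And>j. 0 \<le> \<alpha> j" and "\<alpha> 0 \<le> 1"
    and decreasing: "\<And>j. a (Suc j) * \<alpha> (Suc j) \<le> a j * \<alpha> j"
    and \<phi>_bounds: "\<And>j. 0 \<le> \<phi> j" "\<And>j. \<phi> j \<le> D"
    and step: "\<And>j. a (Suc j) * \<phi> (Suc j) \<le> a j * ((1 + \<alpha> j) * \<phi> j - \<alpha> j * \<phi> (j - 1)) + r j"
  shows "0 \<le> a 0 * D + (\<Sum>j<k. r j)"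
proof -
  have invariant: "a n * \<phi> n + a n * \<alpha> n * (D - \<phi> (n - 1)) \<le> a 0 * D + (\<Sum>j<n. r j)" for n
  proof (induction n)
    case 0
    have "a 0 * (1 - \<alpha> 0) * \<phi> 0 \<le> a 0 * (1 - \<alpha> 0) * D"
      using a_nonneg \<open>\<alpha> 0 \<le> 1\<close> \<phi>_bounds by (intro mult_left_mono) auto
    then show ?case by (simp add: algebra_simps)
  next
    case (Suc n)
    have "(a n * \<alpha> n - a (Suc n) * \<alpha> (Suc n)) * \<phi> n \<le> (a n * \<alpha> n - a (Suc n) * \<alpha> (Suc n)) * D"
      using decreasing \<phi>_bounds by (intro mult_left_mono) auto
    then show ?case using Suc.IH step[of n] by (simp add: algebra_simps)
  qed
  have "0 \<le> a k * \<phi> k + a k * \<alpha> k * (D - \<phi> (k - 1))"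
    using a_nonneg \<alpha>_nonneg \<phi>_bounds by simp
  then show ?thesis using invariant by (rule order_trans)
qed

lemma Gap_le:
  assumes "X \<noteq> {}" "\<And>u. u \<in> X \<Longrightarrow> inner (F u) (z - u) \<le> c"
  shows "Gap z F X \<le> c"
  unfolding Gap_def using assms by (intro cSUP_least)

lemma Gap_nonneg:
  fixes F :: "'a::real_inner \<Rightarrow> 'a"
  assumes "compact X" "continuous_on X F" "s \<in> X" "\<forall>v\<in>X. 0 \<le> inner (F s) (v - s)" "z \<in> X"
  shows "0 \<le> Gap z F X"
proof -
  have "continuous_on X (\<lambda>u. inner (F u) (z - u))"
    using assms(2) by (intro continuous_intros)
  then have "bdd_above ((\<lambda>u. inner (F u) (z - u)) ` X)"
    using assms(1) by (intro bounded_imp_bdd_above compact_imp_bounded compact_continuous_image)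
  then have "inner (F s) (z - s) \<le> Gap z F X"
    unfolding Gap_def using assms(3) by (rule cSUP_upper2) simp
  then show ?thesis using assms(4,5) by fastforce
qed

lemma inner_weighted_mean_diff:
  assumes "(\<Sum>j\<in>J. c j) \<noteq> 0"
  shows "inner v ((1 / (\<Sum>j\<in>J. c j)) *\<^sub>R (\<Sum>j\<in>J. c j *\<^sub>R y j) - u)
    = (\<Sum>j\<in>J. c j * inner v (y j - u)) / (\<Sum>j\<in>J. c j)"
proof -
  have "(1 / (\<Sum>j\<in>J. c j)) *\<^sub>R (\<Sum>j\<in>J. c j *\<^sub>R y j) - u
      = (1 / (\<Sum>j\<in>J. c j)) *\<^sub>R (\<Sum>j\<in>J. c j *\<^sub>R (y j - u))"
    using assms by (simp add: scaleR_diff_right sum_subtractf scaleR_sum_left[symmetric])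
  then show ?thesis by (simp add: inner_sum_right)
qed

lemma weighted_mean_in_convex:
  assumes "convex X" "finite J" "\<And>j. j \<in> J \<Longrightarrow> 0 \<le> c j" "\<And>j. j \<in> J \<Longrightarrow> y j \<in> X"
    and "0 < (\<Sum>j\<in>J. c j)"
  shows "(1 / (\<Sum>j\<in>J. c j)) *\<^sub>R (\<Sum>j\<in>J. c j *\<^sub>R y j) \<in> X"
proof -
  have "(\<Sum>j\<in>J. (c j / (\<Sum>i\<in>J. c i)) *\<^sub>R y j) \<in> X"
    using assms by (intro convex_sum) (auto simp: sum_divide_distrib[symmetric])
  then show ?thesis by (simp add: scaleR_sum_right)
qed

locale ineireg =
  fixes F H :: "'a::euclidean_space \<Rightarrow> 'a"
    and DomF DomH X \<Omega> :: "'a set"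
    and LF LH \<mu> :: real
    and \<alpha> lam \<eta> :: "nat \<Rightarrow> real"
    and x w w' y :: "nat \<Rightarrow> 'a"
    and xm1 :: 'a
  assumes F_mono: "monotone_op F DomF"
    and F_lip: "lipschitz_on LF DomF F"
    and H_lip: "lipschitz_on LH DomH H"
    and mu_pos: "\<mu> > 0"
    and H_strong: "strongly_monotone_op \<mu> H DomH"
    and X_ne: "X \<noteq> {}" and X_compact: "compact X" and X_convex: "convex X"
    and Om_closed: "closed \<Omega>" and Om_convex: "convex \<Omega>"
    and X_sub: "X \<subseteq> \<Omega>" and Om_sub: "\<Omega> \<subseteq> DomF \<inter> DomH"
    and Q_ne: "{z\<in>X. \<forall>v\<in>X. inner (F z) (v - z) \<ge> 0} \<noteq> {}"
    and x0: "x 0 \<in> X" and xm1_eq: "xm1 = x 0"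
    and alpha_nonneg: "\<And>k. \<alpha> k \<ge> 0"
    and lambda_pos: "\<And>k. lam k > 0"
    and eta_pos: "\<And>k. \<eta> k > 0"
    and w_def: "\<And>k. w k = x k + \<alpha> k *\<^sub>R (x k - (if k = 0 then xm1 else x (k - 1)))"
    and w'_def: "\<And>k. w' k = closest_point \<Omega> (w k)"
    and y_def: "\<And>k. y k = closest_point X (w k - lam k *\<^sub>R (F (w' k) + \<eta> k *\<^sub>R H (w' k)))"
    and x_next: "\<And>k. x (Suc k) = closest_point X (w k - lam k *\<^sub>R (F (y k) + \<eta> k *\<^sub>R H (y k)))"
    and eta_noninc: "\<And>k. \<eta> (Suc k) \<le> \<eta> k"
    and lambda_bound: "\<And>k. lam k < 1 / (LF + \<eta> k * LH)"
    and alpha0: "\<alpha> 0 \<le> 1"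
    and alpha_rec: "\<And>k. \<alpha> (Suc k) \<le>
        (1 - 1 / (1 / (1 - (lam k)\<^sup>2 * (LF + \<eta> k * LH)\<^sup>2) + 1 / (2 * lam k * \<eta> k * \<mu>))) * \<alpha> k"
begin

definition L :: "nat \<Rightarrow> real" where
  "L j = LF + \<eta> j * LH"

definition \<beta> :: "nat \<Rightarrow> real" where
  "\<beta> j = 1 / (1 / (1 - (lam j)\<^sup>2 * (L j)\<^sup>2) + 1 / (2 * lam j * \<eta> j * \<mu>))"

definition p :: "nat \<Rightarrow> real" where
  "p j = 1 / (\<Prod>i\<le>j. 1 - \<beta> i)"

definition p_prev :: "nat \<Rightarrow> real" where
  "p_prev j = (if j = 0 then 1 else p (j - 1))"

lemma x_prev: "(if j = 0 then xm1 else x (j - 1)) = x (j - 1)"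
  using xm1_eq by simp

definition \<delta> :: "nat \<Rightarrow> real" where
  "\<delta> j = \<alpha> j * (1 + \<alpha> j) * (norm (x j - x (j - 1)))\<^sup>2"

definition weight :: "nat \<Rightarrow> real" where
  "weight j = lam j * \<eta> j * p j"

definition \<Lambda> :: "nat \<Rightarrow> real" where
  "\<Lambda> k = (\<Sum>j<k. weight j)"

definition y_avg :: "nat \<Rightarrow> 'a" where
  "y_avg k = (1 / \<Lambda> k) *\<^sub>R (\<Sum>j<k. weight j *\<^sub>R y j)"

definition D\<^sub>X :: real where
  "D\<^sub>X = diameter X"

definition C\<^sub>H :: real where
  "C\<^sub>H = (SUP z\<in>X. norm (H z))"

lemma X_closed: "closed X"
  using X_compact by (rule compact_imp_closed)

lemma x_in_X: "x j \<in> X"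
  by (cases j) (use x0 x_next closest_point_in_set[OF X_closed X_ne] in auto)

lemma y_in_X: "y j \<in> X"
  using y_def closest_point_in_set[OF X_closed X_ne] by auto

lemma norm_diff_le_D\<^sub>X: "u \<in> X \<Longrightarrow> v \<in> X \<Longrightarrow> norm (u - v) \<le> D\<^sub>X"
  unfolding D\<^sub>X_def using diameter_bounded_bound[OF compact_imp_bounded[OF X_compact]]
  by (simp add: dist_norm)

lemma norm_H_le_C\<^sub>H:
  assumes "u \<in> X"
  shows "norm (H u) \<le> C\<^sub>H"
proof -
  have "continuous_on X H"
    using lipschitz_on_continuous_on[OF H_lip] X_sub Om_sub continuous_on_subset by blast
  then have "bdd_above ((\<lambda>z. norm (H z)) ` X)"
    using X_compact by (intro bounded_imp_bdd_above compact_imp_bounded compact_continuous_image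
        continuous_intros)
  then show ?thesis unfolding C\<^sub>H_def using assms by (rule cSUP_upper2) simp
qed

lemma L_pos: "0 < L j"
proof (rule ccontr)
  assume "\<not> 0 < L j"
  then have "1 / (LF + \<eta> j * LH) \<le> 0"
    unfolding L_def by simp
  then show False
    using lambda_bound[of j] lambda_pos[of j] by linarith
qed

lemma lam_L_lt_1: "lam j * L j < 1"
  using lambda_bound[of j] L_pos[of j] unfolding L_def by (simp add: less_divide_eq mult.commute)

lemma contraction_factor_bounds: "0 < 1 - (lam j)\<^sup>2 * (L j)\<^sup>2" "1 - (lam j)\<^sup>2 * (L j)\<^sup>2 \<le> 1"
proof -
  have "0 \<le> lam j * L j"
    using lambda_pos[of j] L_pos[of j] by simp
  then have "(lam j * L j)\<^sup>2 < 1"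
    using lam_L_lt_1[of j] by (simp add: power_less_one_iff abs_less_iff)
  then show "0 < 1 - (lam j)\<^sup>2 * (L j)\<^sup>2" "1 - (lam j)\<^sup>2 * (L j)\<^sup>2 \<le> 1"
    by (simp_all add: power_mult_distrib)
qed

lemma \<beta>_bounds: "0 < \<beta> j" "\<beta> j < 1"
proof -
  have "1 \<le> 1 / (1 - (lam j)\<^sup>2 * (L j)\<^sup>2)" "0 < 1 / (2 * lam j * \<eta> j * \<mu>)"
    using contraction_factor_bounds[of j] lambda_pos[of j] eta_pos[of j] mu_pos by simp_all
  then have "1 < 1 / (1 - (lam j)\<^sup>2 * (L j)\<^sup>2) + 1 / (2 * lam j * \<eta> j * \<mu>)"
    by linarith
  then show "0 < \<beta> j" "\<beta> j < 1"
    unfolding \<beta>_def by simp_all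
qed

lemma p_pos: "0 < p j"
  unfolding p_def using \<beta>_bounds by (simp add: prod_pos)

lemma p_prev_pos: "0 < p_prev j"
  unfolding p_prev_def using p_pos by simp

lemma p_mult_one_minus_\<beta>: "p j * (1 - \<beta> j) = p_prev j"
proof (cases j)
  case 0
  then show ?thesis using \<beta>_bounds[of 0] unfolding p_def p_prev_def by simp
next
  case (Suc i)
  have "0 < (\<Prod>l\<le>i. 1 - \<beta> l)"
    using \<beta>_bounds by (simp add: prod_pos)
  then show ?thesis using Suc \<beta>_bounds[of j] unfolding p_def p_prev_def by simp
qed

lemma step_estimate:
  assumes u: "u \<in> X"
  shows "(norm (x (Suc j) - u))\<^sup>2 \<le> (1 - \<beta> j) * (norm (w j - u))\<^sup>2
    - 2 * lam j * inner (F u) (y j - u) + 2 * lam j * \<eta> j * inner (H u) (u - y j)"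
proof -
  define G where "G = (\<lambda>z. F z + \<eta> j *\<^sub>R H z)"
  have G_lip: "lipschitz_on (L j) \<Omega> G"
    unfolding G_def L_def using eta_pos[of j] Om_sub
    by (intro lipschitz_on_add lipschitz_on_cmult_nonneg lipschitz_on_mono[OF F_lip]
        lipschitz_on_mono[OF H_lip]) auto
  have proj: "(norm (x (Suc j) - u))\<^sup>2 \<le> (norm (w j - u))\<^sup>2
      - (1 - (lam j)\<^sup>2 * (L j)\<^sup>2) * (norm (w j - y j))\<^sup>2 + 2 * lam j * inner (G (y j)) (u - y j)"
    by (rule extragradient_projection_estimate[OF X_convex X_closed X_ne Om_convex Om_closed X_sub
          G_lip _ u w'_def]) (use lambda_pos[of j] y_def x_next in \<open>simp_all add: G_def\<close>)
  have "strongly_monotone_op (\<eta> j * \<mu>) G (DomF \<inter> DomH)"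
    unfolding G_def using F_mono H_strong eta_pos[of j] by (simp add: strongly_monotone_op_add)
  then have "\<eta> j * \<mu> * (norm (y j - u))\<^sup>2 \<le> inner (G (y j) - G u) (y j - u)"
    using y_in_X u X_sub Om_sub unfolding strongly_monotone_op_def by blast
  then have "inner (G (y j)) (u - y j)
      \<le> - inner (F u) (y j - u) + \<eta> j * inner (H u) (u - y j) - \<eta> j * \<mu> * (norm (y j - u))\<^sup>2"
    unfolding G_def by (simp add: inner_simps inner_commute algebra_simps)
  then have "2 * lam j * inner (G (y j)) (u - y j) \<le> 2 * lam j * (- inner (F u) (y j - u)
      + \<eta> j * inner (H u) (u - y j) - \<eta> j * \<mu> * (norm (y j - u))\<^sup>2)"
    using lambda_pos[of j] by simp
  moreover have "\<beta> j * (norm (w j - u))\<^sup>2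
      \<le> (1 - (lam j)\<^sup>2 * (L j)\<^sup>2) * (norm (w j - y j))\<^sup>2 + 2 * lam j * \<eta> j * \<mu> * (norm (y j - u))\<^sup>2"
    unfolding \<beta>_def using contraction_factor_bounds lambda_pos eta_pos mu_pos
    by (intro harmonic_mean_mult_sq_le norm_diff_triangle_le) auto
  ultimately show ?thesis
    using proj by (simp add: algebra_simps)
qed

lemma norm_w_diff_sq:
  "(norm (w j - u))\<^sup>2 = (1 + \<alpha> j) * (norm (x j - u))\<^sup>2 - \<alpha> j * (norm (x (j - 1) - u))\<^sup>2 + \<delta> j"
proof -
  have "w j - u = (1 + \<alpha> j) *\<^sub>R (x j - u) - \<alpha> j *\<^sub>R (x (j - 1) - u)"
    using w_def[of j] unfolding x_prev by (simp add: algebra_simps)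
  then show ?thesis
    using norm_extrapolation_sq[of "\<alpha> j" "x j - u" "x (j - 1) - u"] unfolding \<delta>_def by simp
qed

lemma inertia_weight_decreasing: "\<eta> (Suc j) * p_prev (Suc j) * \<alpha> (Suc j) \<le> \<eta> j * p_prev j * \<alpha> j"
proof -
  have "\<eta> (Suc j) * p_prev (Suc j) * \<alpha> (Suc j) \<le> \<eta> j * p j * ((1 - \<beta> j) * \<alpha> j)"
    unfolding p_prev_def using eta_noninc[of j] alpha_rec[of j] p_pos[of j] alpha_nonneg[of "Suc j"]
      eta_pos[of j] unfolding \<beta>_def L_def
    by (simp add: mult_mono mult_left_mono)
  also have "\<dots> = \<eta> j * p_prev j * \<alpha> j"
    unfolding p_mult_one_minus_\<beta>[symmetric] by (simp add: algebra_simps)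
  finally show ?thesis .
qed

lemma weighted_step_estimate:
  assumes u: "u \<in> X"
  shows "\<eta> (Suc j) * p_prev (Suc j) * (norm (x (Suc j) - u))\<^sup>2
    \<le> \<eta> j * p_prev j * ((1 + \<alpha> j) * (norm (x j - u))\<^sup>2 - \<alpha> j * (norm (x (j - 1) - u))\<^sup>2)
      + (\<eta> j * p_prev j * \<delta> j + 2 * (lam j * (\<eta> j)\<^sup>2 * p j * C\<^sub>H * D\<^sub>X)
         - 2 * (weight j * inner (F u) (y j - u)))"
proof -
  have "inner (H u) (u - y j) \<le> C\<^sub>H * D\<^sub>X"
    using norm_cauchy_schwarz[of "H u" "u - y j"] norm_H_le_C\<^sub>H[OF u] norm_diff_le_D\<^sub>X[OF u y_in_X]
    by (smt (verit) mult_mono norm_ge_zero)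
  then have "(norm (x (Suc j) - u))\<^sup>2 \<le> (1 - \<beta> j) * (norm (w j - u))\<^sup>2
      - 2 * lam j * inner (F u) (y j - u) + 2 * lam j * \<eta> j * (C\<^sub>H * D\<^sub>X)"
    using step_estimate[OF u, of j] lambda_pos[of j] eta_pos[of j] by (smt (verit) mult_left_mono
        mult_pos_pos)
  then have "\<eta> j * p j * (norm (x (Suc j) - u))\<^sup>2 \<le> \<eta> j * p j * ((1 - \<beta> j) * (norm (w j - u))\<^sup>2
      - 2 * lam j * inner (F u) (y j - u) + 2 * lam j * \<eta> j * (C\<^sub>H * D\<^sub>X))"
    using eta_pos[of j] p_pos[of j] by simp
  also have "\<dots> = \<eta> j * p_prev j * (norm (w j - u))\<^sup>2
      + 2 * (lam j * (\<eta> j)\<^sup>2 * p j * C\<^sub>H * D\<^sub>X) - 2 * (weight j * inner (F u) (y j - u))"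
    unfolding weight_def p_mult_one_minus_\<beta>[symmetric] by (simp add: power2_eq_square algebra_simps)
  finally have "\<eta> j * p j * (norm (x (Suc j) - u))\<^sup>2 \<le> \<eta> j * p_prev j * (norm (w j - u))\<^sup>2
      + 2 * (lam j * (\<eta> j)\<^sup>2 * p j * C\<^sub>H * D\<^sub>X) - 2 * (weight j * inner (F u) (y j - u))" .
  moreover have "\<eta> (Suc j) * p_prev (Suc j) * (norm (x (Suc j) - u))\<^sup>2
      \<le> \<eta> j * p j * (norm (x (Suc j) - u))\<^sup>2"
    unfolding p_prev_def using eta_noninc[of j] p_pos[of j] by (simp add: mult_right_mono)
  ultimately show ?thesis
    unfolding norm_w_diff_sq by (simp add: algebra_simps)
qed

lemma weighted_gap_sum_bound:
  assumes u: "u \<in> X"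
  shows "2 * (\<Sum>j<k. weight j * inner (F u) (y j - u))
    \<le> \<eta> 0 * D\<^sub>X\<^sup>2 + (\<Sum>j<k. \<eta> j * p_prev j * \<delta> j) + 2 * (\<Sum>j<k. lam j * (\<eta> j)\<^sup>2 * p j) * C\<^sub>H * D\<^sub>X"
proof -
  have "0 \<le> \<eta> 0 * p_prev 0 * D\<^sub>X\<^sup>2 + (\<Sum>j<k. \<eta> j * p_prev j * \<delta> j
      + 2 * (lam j * (\<eta> j)\<^sup>2 * p j * C\<^sub>H * D\<^sub>X) - 2 * (weight j * inner (F u) (y j - u)))"
  proof (rule inertial_lyapunov_bound[where \<phi> = "\<lambda>j. (norm (x j - u))\<^sup>2"])
    show "0 \<le> \<eta> j * p_prev j" for j
      using eta_pos[of j] p_prev_pos[of j] by simp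
    show "(norm (x j - u))\<^sup>2 \<le> D\<^sub>X\<^sup>2" for j
      using norm_diff_le_D\<^sub>X[OF x_in_X u] by (simp add: power_mono)
  qed (use alpha_nonneg alpha0 inertia_weight_decreasing weighted_step_estimate[OF u] in auto)
  then show ?thesis
    unfolding p_prev_def by (simp add: sum.distrib sum_subtractf sum_distrib_left sum_distrib_right
        algebra_simps)
qed

lemma gap_bounds:
  assumes "1 \<le> k"
  shows "0 \<le> Gap (y_avg k) F X \<and> Gap (y_avg k) F X \<le> 1 / (2 * \<Lambda> k) *
    (\<eta> 0 * D\<^sub>X\<^sup>2 + (\<Sum>j<k. \<eta> j * p_prev j * \<delta> j) + 2 * (\<Sum>j<k. lam j * (\<eta> j)\<^sup>2 * p j) * C\<^sub>H * D\<^sub>X)"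
proof
  have weight_pos: "0 < weight j" for j
    unfolding weight_def using lambda_pos eta_pos p_pos by simp
  then have \<Lambda>_pos: "0 < \<Lambda> k"
    unfolding \<Lambda>_def using assms by (intro sum_pos) (auto simp: lessThan_empty_iff)
  show "0 \<le> Gap (y_avg k) F X"
  proof -
    obtain s where "s \<in> X" "\<forall>v\<in>X. 0 \<le> inner (F s) (v - s)"
      using Q_ne by blast
    moreover have "continuous_on X F"
      using lipschitz_on_continuous_on[OF F_lip] X_sub Om_sub continuous_on_subset by blast
    moreover have "y_avg k \<in> X"
      unfolding y_avg_def \<Lambda>_def using X_convex weight_pos y_in_X \<Lambda>_pos[unfolded \<Lambda>_def]
      by (intro weighted_mean_in_convex) (auto intro: less_imp_le)
    ultimately show ?thesis
      using Gap_nonneg[OF X_compact] by blast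
  qed
  show "Gap (y_avg k) F X \<le> 1 / (2 * \<Lambda> k) *
    (\<eta> 0 * D\<^sub>X\<^sup>2 + (\<Sum>j<k. \<eta> j * p_prev j * \<delta> j) + 2 * (\<Sum>j<k. lam j * (\<eta> j)\<^sup>2 * p j) * C\<^sub>H * D\<^sub>X)"
  proof (rule Gap_le[OF X_ne])
    fix u assume u: "u \<in> X"
    have "inner (F u) (y_avg k - u) = (\<Sum>j<k. weight j * inner (F u) (y j - u)) / \<Lambda> k"
      unfolding y_avg_def \<Lambda>_def using \<Lambda>_pos[unfolded \<Lambda>_def] by (intro inner_weighted_mean_diff) simp
    then show "inner (F u) (y_avg k - u) \<le> 1 / (2 * \<Lambda> k) *
      (\<eta> 0 * D\<^sub>X\<^sup>2 + (\<Sum>j<k. \<eta> j * p_prev j * \<delta> j) + 2 * (\<Sum>j<k. lam j * (\<eta> j)\<^sup>2 * p j) * C\<^sub>H * D\<^sub>X)"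
      using weighted_gap_sum_bound[OF u, of k] \<Lambda>_pos by (simp add: field_simps)
  qed
qed

end

theorem proposition4p7:
  fixes F H :: "'a::euclidean_space \<Rightarrow> 'a"
    and DomF DomH X \<Omega> :: "'a set"
    and LF LH \<mu> :: real
    and \<alpha> lam \<eta> :: "nat \<Rightarrow> real"
    and x w w' y :: "nat \<Rightarrow> 'a"
    and xm1 :: 'a
  assumes F_mono: "monotone_op F DomF"
    and H_mono: "monotone_op H DomH"
    and F_lip: "lipschitz_on LF DomF F" and LF_pos: "LF > 0"
    and H_lip: "lipschitz_on LH DomH H" and LH_pos: "LH > 0"
    and mu_pos: "\<mu> > 0"
    and H_strong: "strongly_monotone_op \<mu> H DomH"
    and X_ne: "X \<noteq> {}" and X_compact: "compact X" and X_convex: "convex X"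
    and Om_ne: "\<Omega> \<noteq> {}" and Om_closed: "closed \<Omega>" and Om_convex: "convex \<Omega>"
    and X_sub: "X \<subseteq> \<Omega>" and Om_sub: "\<Omega> \<subseteq> DomF \<inter> DomH"
    and Q_ne: "{z\<in>X. \<forall>v\<in>X. inner (F z) (v - z) \<ge> 0} \<noteq> {}"
    and x0: "x 0 \<in> X" and xm1_def: "xm1 = x 0"
    and alpha_nonneg: "\<And>k. \<alpha> k \<ge> 0"
    and lambda_pos: "\<And>k. lam k > 0"
    and eta_pos: "\<And>k. \<eta> k > 0"
    and w_def: "\<And>k. w k = x k + \<alpha> k *\<^sub>R (x k - (if k = 0 then xm1 else x (k - 1)))"
    and w'_def: "\<And>k. w' k = closest_point \<Omega> (w k)"
    and y_def: "\<And>k. y k = closest_point X (w k - lam k *\<^sub>R (F (w' k) + \<eta> k *\<^sub>R H (w' k)))"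
    and x_next: "\<And>k. x (Suc k) = closest_point X (w k - lam k *\<^sub>R (F (y k) + \<eta> k *\<^sub>R H (y k)))"
    and eta_noninc: "\<And>k. \<eta> (Suc k) \<le> \<eta> k"
    and lambda_bound: "\<And>k. lam k < 1 / (LF + \<eta> k * LH)"
    and alpha0: "\<alpha> 0 \<le> 1"
    and alpha_rec: "\<And>k. \<alpha> (Suc k) \<le>
        (1 - 1 / (1 / (1 - (lam k)\<^sup>2 * (LF + \<eta> k * LH)\<^sup>2) + 1 / (2 * lam k * \<eta> k * \<mu>))) * \<alpha> k"
    and k_ge: "k \<ge> 1"
  shows "let L = (%j. LF + \<eta> j * LH);
             \<beta> = (%j. 1 / (1 / (1 - (lam j)\<^sup>2 * (L j)\<^sup>2) + 1 / (2 * lam j * \<eta> j * \<mu>)));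
             p = (%j. 1 / (\<Prod>i\<le>j. (1 - \<beta> i)));
             pm1 = (%j. if j = 0 then 1 else p (j - 1));
             xprev = (%j. if j = 0 then xm1 else x (j - 1));
             \<delta> = (%j. \<alpha> j * (1 + \<alpha> j) * (norm (x j - xprev j))\<^sup>2);
             Lam = (\<Sum>j<k. lam j * \<eta> j * p j);
             ybar = (1 / Lam) *\<^sub>R (\<Sum>j<k. (lam j * \<eta> j * p j) *\<^sub>R y j);
             DX = diameter X;
             CH = (SUP z\<in>X. norm (H z))
         in 0 \<le> Gap ybar F X \<and>
            Gap ybar F X \<le> 1 / (2 * Lam) *
              (\<eta> 0 * DX\<^sup>2 + (\<Sum>j<k. \<eta> j * pm1 j * \<delta> j)
               + 2 * (\<Sum>j<k. lam j * (\<eta> j)\<^sup>2 * p j) * CH * DX)"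
proof -
  interpret ineireg F H DomF DomH X \<Omega> LF LH \<mu> \<alpha> lam \<eta> x w w' y xm1
    by unfold_locales (fact assms)+
  show ?thesis
    using gap_bounds[OF k_ge]
    unfolding Let_def x_prev y_avg_def \<Lambda>_def weight_def p_prev_def p_def \<beta>_def L_def \<delta>_def
      D\<^sub>X_def C\<^sub>H_def .
qed

end
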